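(* There is a function $f\colon\mathbb{N}\times\mathbb{N}\to\mathbb{N}$ such that for every prime power $q$ and every positive integer $k$, every $\mathrm{GF}(q)$-representable matroid is $(f(q,k),k)$-weakly base orderable.
   Context: For a positive integer $k$, an ordered pair $(B_1,B_2)$ of bases has the $k$-exchange property if there exist pairwise disjoint nonempty $X_1,\dots,X_k\subseteq B_1\setminus B_2$ and pairwise disjoint nonempty $Y_1,\dots,Y_k\subseteq B_2\setminus B_1$ such that $(B_1\setminus\bigcup_{i\in Z}X_i)\cup\bigcup_{i\in Z}Y_i$ is a basis for every $Z\subseteq[k]$. A matroid is $(\alpha,k)$-weakly base orderable if every ordered pair $(B_1,B_2)$ of bases with $|B_1\setminus B_2|\ge\alpha$ has the $k$-exchange property. *)

theory Defs
  imports "HOL-Algebra.Ring" "HOL-Computational_Algebra.Primes"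
begin

definition matroid :: "'e set \<Rightarrow> ('e set \<Rightarrow> bool) \<Rightarrow> bool" where
  "matroid E indep \<longleftrightarrow> finite E
     \<and> (\<forall>X. indep X \<longrightarrow> X \<subseteq> E)
     \<and> indep {}
     \<and> (\<forall>X Y. indep Y \<and> X \<subseteq> Y \<longrightarrow> indep X)
     \<and> (\<forall>X Y. indep X \<and> indep Y \<and> card X < card Y \<longrightarrow> (\<exists>y\<in>Y - X. indep (insert y X)))"

definition basis :: "'e set \<Rightarrow> ('e set \<Rightarrow> bool) \<Rightarrow> 'e set \<Rightarrow> bool" where
  "basis E indep B \<longleftrightarrow> indep B \<and> (\<forall>X. indep X \<and> B \<subseteq> X \<longrightarrow> X = B)"

definition k_exchange :: "'e set \<Rightarrow> ('e set \<Rightarrow> bool) \<Rightarrow> nat \<Rightarrow> 'e set \<Rightarrow> 'e set \<Rightarrow> bool" where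
  "k_exchange E indep k B1 B2 \<longleftrightarrow>
     (\<exists>X Y :: nat \<Rightarrow> 'e set.
        (\<forall>i\<in>{1..k}. X i \<noteq> {} \<and> X i \<subseteq> B1 - B2 \<and> Y i \<noteq> {} \<and> Y i \<subseteq> B2 - B1)
      \<and> (\<forall>i\<in>{1..k}. \<forall>j\<in>{1..k}. i \<noteq> j \<longrightarrow> X i \<inter> X j = {} \<and> Y i \<inter> Y j = {})
      \<and> (\<forall>Z. Z \<subseteq> {1..k} \<longrightarrow>
             basis E indep ((B1 - (\<Union>i\<in>Z. X i)) \<union> (\<Union>i\<in>Z. Y i))))"

definition weakly_base_orderable :: "'e set \<Rightarrow> ('e set \<Rightarrow> bool) \<Rightarrow> nat \<Rightarrow> nat \<Rightarrow> bool" where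
  "weakly_base_orderable E indep \<alpha> k \<longleftrightarrow>
     (\<forall>B1 B2. basis E indep B1 \<and> basis E indep B2 \<and> card (B1 - B2) \<ge> \<alpha>
        \<longrightarrow> k_exchange E indep k B1 B2)"

text \<open>Columns v x (x in X), vectors in F^r given as functions on indices i < r,
  are linearly independent over the field F (as a family, so repeated columns are dependent).\<close>
definition lin_indep_cols :: "('a, 'b) ring_scheme \<Rightarrow> nat \<Rightarrow> ('e \<Rightarrow> nat \<Rightarrow> 'a) \<Rightarrow> 'e set \<Rightarrow> bool" where
  "lin_indep_cols F r v X \<longleftrightarrow>
     (\<forall>c. (\<forall>x\<in>X. c x \<in> carrier F)
          \<and> (\<forall>i<r. finsum F (\<lambda>x. c x \<otimes>\<^bsub>F\<^esub> v x i) X = \<zero>\<^bsub>F\<^esub>)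
          \<longrightarrow> (\<forall>x\<in>X. c x = \<zero>\<^bsub>F\<^esub>))"

definition representable_over :: "('a, 'b) ring_scheme \<Rightarrow> 'e set \<Rightarrow> ('e set \<Rightarrow> bool) \<Rightarrow> bool" where
  "representable_over F E indep \<longleftrightarrow>
     (\<exists>r v. (\<forall>x\<in>E. \<forall>i<r. v x i \<in> carrier F)
        \<and> (\<forall>X. indep X \<longleftrightarrow> X \<subseteq> E \<and> lin_indep_cols F r v X))"

end

theory Submission
  imports Defs "HOL-Algebra.Multiplicative_Group" "HOL-Library.Ramsey"
begin

text \<open>
  Given bases \<open>B\<^sub>1\<close>, \<open>B\<^sub>2\<close>, let \<open>A\<close> be the matrix of coordinates of the elements of
  \<open>B\<^sub>2 - B\<^sub>1\<close> in the basis \<open>B\<^sub>1\<close>, with rows indexed by \<open>B\<^sub>1 - B\<^sub>2\<close>. Exchanging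
  \<open>X \<subseteq> B\<^sub>1\<close> for \<open>Y \<subseteq> B\<^sub>2 - B\<^sub>1\<close> of the same size gives a basis as soon as the submatrix
  \<open>A[X, Y]\<close> is nonsingular. The rows of \<open>A\<close> are pairwise distinct words over the \<open>q\<close> field
  elements, so \<open>q\<^sup>L\<close> of them contain a staircase of length \<open>L\<close>: rows \<open>x\<^sub>i\<close> and columns
  \<open>y\<^sub>i\<close> with \<open>A(x\<^sub>j, y\<^sub>i) = w\<^sub>i\<close> for \<open>j > i\<close> but \<open>A(x\<^sub>i, y\<^sub>i) \<noteq> w\<^sub>i\<close>. Ramsey's theorem
  for pairs then yields \<open>k q (q - 1) + 1\<close> indices on which \<open>A\<close> has constant entries below, on and
  above the diagonal. Such a matrix, after dropping one row in the degenerate case, is nonsingular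
  whenever its size is a multiple of \<open>q (q - 1)\<close>, because a kernel vector is a geometric
  progression and the geometric sum of that length vanishes in \<open>GF(q)\<close>. Cutting the indices into
  \<open>k\<close> blocks of size \<open>q (q - 1)\<close>, every union of blocks gives a nonsingular submatrix.
\<close>

section \<open>Matroid bases\<close>

lemma matroid_augment:
  assumes "matroid E Ind" "Ind X" "Ind Y" "card X < card Y"
  obtains y where "y \<in> Y - X" "Ind (insert y X)"
  using assms unfolding matroid_def by blast

lemma matroid_indep_finite: "matroid E Ind \<Longrightarrow> Ind X \<Longrightarrow> finite X"
  unfolding matroid_def by (meson finite_subset)

lemma indep_card_eq_basis:
  assumes M: "matroid E Ind" and B: "basis E Ind B" and S: "Ind S" and card: "card S = card B"
  shows "basis E Ind S"
  unfolding basis_def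
proof (intro conjI allI impI S)
  fix X assume X: "Ind X \<and> S \<subseteq> X"
  show "X = S"
  proof (rule ccontr)
    assume "X \<noteq> S"
    then have "card B < card X"
      using X matroid_indep_finite[OF M] card by (metis psubsetI psubset_card_mono)
    then obtain y where "y \<in> X - B" "Ind (insert y B)"
      using matroid_augment[OF M] B X unfolding basis_def by metis
    then show False using B unfolding basis_def by blast
  qed
qed

section \<open>Sums and powers in a finite field\<close>

lemma (in abelian_monoid) finsum_swap:
  assumes "finite A" "finite B" "\<And>x y. x \<in> A \<Longrightarrow> y \<in> B \<Longrightarrow> f x y \<in> carrier G"
  shows "(\<Oplus>x\<in>A. \<Oplus>y\<in>B. f x y) = (\<Oplus>y\<in>B. \<Oplus>x\<in>A. f x y)"
  using assms(1,3)
proof (induction A rule: finite_induct)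
  case (insert a A)
  have fa: "(\<lambda>y. f a y) \<in> B \<rightarrow> carrier G" and fA: "(\<lambda>y. \<Oplus>x\<in>A. f x y) \<in> B \<rightarrow> carrier G"
    using insert.prems by (auto intro: finsum_closed)
  have "(\<Oplus>x\<in>insert a A. \<Oplus>y\<in>B. f x y) = (\<Oplus>y\<in>B. f a y) \<oplus> (\<Oplus>y\<in>B. \<Oplus>x\<in>A. f x y)"
    using insert fa by (subst finsum_insert) (auto intro: finsum_closed)
  also have "\<dots> = (\<Oplus>y\<in>B. f a y \<oplus> (\<Oplus>x\<in>A. f x y))"
    using fa fA by (rule finsum_addf[symmetric])
  also have "\<dots> = (\<Oplus>y\<in>B. \<Oplus>x\<in>insert a A. f x y)"
    using insert fA by (intro finsum_cong') (auto simp: finsum_insert)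
  finally show ?case .
qed simp

lemma (in ring) finsum_uminus:
  assumes "finite A" "f \<in> A \<rightarrow> carrier R"
  shows "(\<Oplus>x\<in>A. \<ominus> f x) = \<ominus> (\<Oplus>x\<in>A. f x)"
  using assms
proof (induction A rule: finite_induct)
  case (insert a A)
  then have fa: "f a \<in> carrier R" and fA: "f \<in> A \<rightarrow> carrier R" by auto
  have "(\<Oplus>x\<in>insert a A. \<ominus> f x) = \<ominus> f a \<oplus> (\<Oplus>x\<in>A. \<ominus> f x)"
    using insert fA fa by (subst finsum_insert) auto
  also have "\<dots> = \<ominus> (f a \<oplus> (\<Oplus>x\<in>A. f x))"
    using insert fa fA by (simp add: minus_add)
  also have "\<dots> = \<ominus> (\<Oplus>x\<in>insert a A. f x)" using insert fa fA by simp
  finally show ?case .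
qed simp

lemma (in ring) finsum_minus:
  assumes "finite A" "f \<in> A \<rightarrow> carrier R" "g \<in> A \<rightarrow> carrier R"
  shows "(\<Oplus>x\<in>A. f x \<ominus> g x) = (\<Oplus>x\<in>A. f x) \<ominus> (\<Oplus>x\<in>A. g x)"
proof -
  have "(\<Oplus>x\<in>A. f x \<ominus> g x) = (\<Oplus>x\<in>A. f x \<oplus> \<ominus> g x)"
    using assms by (intro finsum_cong') (auto simp: minus_eq)
  also have "\<dots> = (\<Oplus>x\<in>A. f x) \<oplus> (\<Oplus>x\<in>A. \<ominus> g x)"
    using assms by (intro finsum_addf) auto
  also have "\<dots> = (\<Oplus>x\<in>A. f x) \<ominus> (\<Oplus>x\<in>A. g x)"
    using assms by (simp add: finsum_uminus minus_eq)
  finally show ?thesis .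
qed

lemma (in abelian_monoid) finsum_eq_single:
  assumes "finite A" "a \<in> A" "f \<in> A \<rightarrow> carrier G" "\<And>x. x \<in> A \<Longrightarrow> x \<noteq> a \<Longrightarrow> f x = \<zero>"
  shows "(\<Oplus>x\<in>A. f x) = f a"
proof -
  have "(\<Oplus>x\<in>A. f x) = (\<Oplus>x\<in>A. if a = x then f x else \<zero>)"
    using assms by (intro finsum_cong') auto
  also have "\<dots> = f a" using assms by (intro finsum_singleton) auto
  finally show ?thesis .
qed

lemma (in abelian_monoid) finsum_eq_two:
  assumes "finite A" "a \<in> A" "b \<in> A" "a \<noteq> b" "f \<in> A \<rightarrow> carrier G"
    "\<And>x. x \<in> A \<Longrightarrow> x \<noteq> a \<Longrightarrow> x \<noteq> b \<Longrightarrow> f x = \<zero>"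
  shows "(\<Oplus>x\<in>A. f x) = f a \<oplus> f b"
proof -
  have fA: "\<And>x. x \<in> A \<Longrightarrow> f x \<in> carrier G" using assms by auto
  have "(\<Oplus>x\<in>A. f x) = (\<Oplus>x\<in>A. (if x = a then f x else \<zero>) \<oplus> (if x = b then f x else \<zero>))"
    using assms fA by (intro finsum_cong') auto
  also have "\<dots> = (\<Oplus>x\<in>A. (if x = a then f x else \<zero>)) \<oplus> (\<Oplus>x\<in>A. (if x = b then f x else \<zero>))"
    using assms by (intro finsum_addf) auto
  also have "\<dots> = f a \<oplus> f b"
    using assms by (subst finsum_eq_single[of _ a], auto, subst finsum_eq_single[of _ b], auto)
  finally show ?thesis .
qed

lemma (in ring) finsum_one_eq_add_pow: "(\<Oplus>u\<in>{..<n::nat}. \<one>) = [n] \<cdot> \<one>"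
proof (induction n)
  case (Suc n)
  have "(\<Oplus>u\<in>{..<Suc n}. \<one>) = \<one> \<oplus> (\<Oplus>u\<in>{..<n}. \<one>)"
    by (subst lessThan_Suc, subst finsum_insert) auto
  also have "\<dots> = [n] \<cdot> \<one> \<oplus> \<one>" using Suc by (simp add: a_comm)
  finally show ?case by simp
qed simp

lemma (in ring) finsum_one_card_dvd:
  assumes "finite (carrier R)" "card (carrier R) dvd N"
  shows "(\<Oplus>u\<in>{..<N::nat}. \<one>) = \<zero>"
proof -
  obtain m where m: "N = card (carrier R) * m" using assms by blast
  have "[card (carrier R)] \<cdot> \<one> = \<zero>" using add.pow_order_eq_1[of \<one>] by (simp add: order_def)
  then have "[m] \<cdot> ([card (carrier R)] \<cdot> \<one>) = \<zero>"
    by (simp add: add.nat_pow_one)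
  then show ?thesis unfolding finsum_one_eq_add_pow m using add.nat_pow_pow[of \<one>] by simp
qed

lemma (in cring) geometric_sum_telescope:
  assumes x: "x \<in> carrier R"
  shows "(x \<ominus> \<one>) \<otimes> (\<Oplus>u\<in>{..<N::nat}. x [^] u) = x [^] N \<ominus> \<one>"
proof (induction N)
  case 0 then show ?case using x by simp algebra
next
  case (Suc N)
  have S: "(\<Oplus>u\<in>{..<Suc N}. x [^] u) = x [^] N \<oplus> (\<Oplus>u\<in>{..<N}. x [^] u)"
    using x by (subst lessThan_Suc, subst finsum_insert) auto
  have c: "(\<Oplus>u\<in>{..<N}. x [^] u) \<in> carrier R" using x by (auto intro!: finsum_closed)
  have p: "x [^] N \<in> carrier R" using x by simp
  have "(x \<ominus> \<one>) \<otimes> (x [^] N \<oplus> (\<Oplus>u\<in>{..<N}. x [^] u))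
      = (x \<ominus> \<one>) \<otimes> x [^] N \<oplus> (x \<ominus> \<one>) \<otimes> (\<Oplus>u\<in>{..<N}. x [^] u)"
    using c p x by (simp add: r_distr)
  also have "\<dots> = (x \<ominus> \<one>) \<otimes> x [^] N \<oplus> (x [^] N \<ominus> \<one>)" using Suc by simp
  also have "\<dots> = x [^] N \<otimes> x \<ominus> \<one>" using p x by algebra
  finally show ?case unfolding S by simp
qed

context field
begin

lemma nonzero_inverse:
  assumes "c \<in> carrier R" "c \<noteq> \<zero>"
  shows "inv c \<in> carrier R" "inv c \<otimes> c = \<one>" "c \<otimes> inv c = \<one>" "inv c \<noteq> \<zero>"
proof -
  have u: "c \<in> Units R" using assms field_Units by blast
  show "inv c \<in> carrier R" "inv c \<otimes> c = \<one>" "c \<otimes> inv c = \<one>" using u by auto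
  then show "inv c \<noteq> \<zero>" using assms by (metis l_null zero_not_one)
qed

lemma eq_neg_inv_mult:
  assumes "c \<in> carrier R" "c \<noteq> \<zero>" "x \<in> carrier R" "S \<in> carrier R" "c \<otimes> x \<oplus> S = \<zero>"
  shows "x = \<ominus> (inv c \<otimes> S)"
proof -
  note inv = nonzero_inverse[OF assms(1,2)]
  have "x \<oplus> inv c \<otimes> S = inv c \<otimes> (c \<otimes> x) \<oplus> inv c \<otimes> S"
    using assms(1,3,4) inv by (simp add: m_assoc[symmetric])
  also have "\<dots> = inv c \<otimes> (c \<otimes> x \<oplus> S)" using assms(1,3,4) inv(1) by (simp add: r_distr)
  also have "\<dots> = \<zero>" using assms(5) inv by simp
  finally have "x \<oplus> inv c \<otimes> S = \<zero>" .
  then show ?thesis using assms inv sum_zero_eq_neg by (metis m_closed)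
qed

lemma card_carrier_ge_two: "finite (carrier R) \<Longrightarrow> 2 \<le> card (carrier R)"
  using card_mono[of "carrier R" "{\<zero>, \<one>}"] by simp

lemma pow_card_minus_one_dvd:
  assumes fin: "finite (carrier R)" and x: "x \<in> carrier R" "x \<noteq> \<zero>"
    and dvd: "(card (carrier R) - 1) dvd N"
  shows "x [^] (N::nat) = \<one>"
proof -
  interpret G: group "mult_of R" by (rule field_mult_group)
  have "x \<in> carrier (mult_of R)" using x by simp
  then have "x [^]\<^bsub>mult_of R\<^esub> order (mult_of R) = \<one>\<^bsub>mult_of R\<^esub>"
    by (rule G.pow_order_eq_1)
  then have fermat: "x [^] (card (carrier R) - 1) = \<one>"
    using order_mult_of[OF fin] by (simp add: nat_pow_mult_of order_def)
  obtain m where m: "N = (card (carrier R) - 1) * m" using dvd by blast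
  show ?thesis unfolding m using nat_pow_pow[OF x(1)] fermat by (metis nat_pow_one)
qed

lemma geometric_sum_vanishes:
  assumes fin: "finite (carrier R)" and x: "x \<in> carrier R" "x \<noteq> \<zero>"
    and dvd: "card (carrier R) * (card (carrier R) - 1) dvd N"
  shows "(\<Oplus>u\<in>{..<N::nat}. x [^] u) = \<zero>"
proof (cases "x = \<one>")
  case True
  then have "(\<Oplus>u\<in>{..<N}. x [^] u) = (\<Oplus>u\<in>{..<N}. \<one>)" by simp
  then show ?thesis using finsum_one_card_dvd[OF fin] dvd dvd_mult_left by metis
next
  case False
  have "x [^] N = \<one>" using pow_card_minus_one_dvd[OF fin x] dvd dvd_mult_right by blast
  then have "(x \<ominus> \<one>) \<otimes> (\<Oplus>u\<in>{..<N}. x [^] u) = \<zero>" using geometric_sum_telescope[OF x(1)] by simp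
  moreover have "x \<ominus> \<one> \<noteq> \<zero>" using False x by simp
  moreover have "(\<Oplus>u\<in>{..<N}. x [^] u) \<in> carrier R" using x by (auto intro!: finsum_closed)
  ultimately show ?thesis using x integral_iff by auto
qed

end

section \<open>Staircase matrices\<close>

definition stair :: "'a \<Rightarrow> 'a \<Rightarrow> 'a \<Rightarrow> nat \<Rightarrow> nat \<Rightarrow> 'a" where
  "stair a b d t u = (if u < t then b else if u = t then d else a)"

lemma stair_strict_mono_on:
  assumes "strict_mono_on S g" "t \<in> S" "u \<in> S"
  shows "stair a b d (g t) (g u) = stair a b d t u"
  using assms strict_mono_on_less[OF assms(1)] strict_mono_on_eq[OF assms(1)]
  unfolding stair_def by simp

lemma stair_shift_rows: "stair z b z (Suc t) u = stair z b b t u"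
  unfolding stair_def by auto

context field
begin

lemma stair_closed: "a \<in> carrier R \<Longrightarrow> b \<in> carrier R \<Longrightarrow> d \<in> carrier R \<Longrightarrow> stair a b d t u \<in> carrier R"
  unfolding stair_def by auto

text \<open>Consecutive rows of a staircase matrix differ only in the two columns \<open>t\<close> and \<open>t + 1\<close>.\<close>

lemma stair_kernel_consecutive:
  assumes abd: "a \<in> carrier R" "b \<in> carrier R" "d \<in> carrier R"
    and c: "\<And>u. u < N \<Longrightarrow> c u \<in> carrier R"
    and rows: "\<And>t. t < N \<Longrightarrow> (\<Oplus>u\<in>{..<N}. stair a b d t u \<otimes> c u) = \<zero>"
    and t: "Suc t < N"
  shows "(d \<ominus> b) \<otimes> c t \<oplus> (a \<ominus> d) \<otimes> c (Suc t) = \<zero>"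
proof -
  let ?S = "stair a b d"
  have Sc: "\<And>t u. ?S t u \<in> carrier R" using stair_closed abd by blast
  have "\<zero> = (\<Oplus>u\<in>{..<N}. ?S t u \<otimes> c u) \<ominus> (\<Oplus>u\<in>{..<N}. ?S (Suc t) u \<otimes> c u)"
    using rows[of t] rows[of "Suc t"] t by (simp add: minus_eq)
  also have "\<dots> = (\<Oplus>u\<in>{..<N}. ?S t u \<otimes> c u \<ominus> ?S (Suc t) u \<otimes> c u)"
    using Sc c by (subst finsum_minus) auto
  also have "\<dots> = (\<Oplus>u\<in>{..<N}. (?S t u \<ominus> ?S (Suc t) u) \<otimes> c u)"
  proof (intro finsum_cong')
    fix u assume "u \<in> {..<N}"
    then have "c u \<in> carrier R" using c by auto
    then show "?S t u \<otimes> c u \<ominus> ?S (Suc t) u \<otimes> c u = (?S t u \<ominus> ?S (Suc t) u) \<otimes> c u"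
      using Sc[of t u] Sc[of "Suc t" u] by algebra
  qed (use Sc c in auto)
  also have "\<dots> = (?S t t \<ominus> ?S (Suc t) t) \<otimes> c t \<oplus> (?S t (Suc t) \<ominus> ?S (Suc t) (Suc t)) \<otimes> c (Suc t)"
  proof (rule finsum_eq_two)
    show "(\<lambda>u. (?S t u \<ominus> ?S (Suc t) u) \<otimes> c u) \<in> {..<N} \<rightarrow> carrier R"
      using Sc c by auto
    fix u assume u: "u \<in> {..<N}" "u \<noteq> t" "u \<noteq> Suc t"
    then have "?S t u = ?S (Suc t) u" unfolding stair_def by auto
    moreover have "?S (Suc t) u \<ominus> ?S (Suc t) u = \<zero>" using Sc r_right_minus_eq by blast
    ultimately show "(?S t u \<ominus> ?S (Suc t) u) \<otimes> c u = \<zero>" using c[of u] u by simp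
  qed (use t in auto)
  also have "\<dots> = (d \<ominus> b) \<otimes> c t \<oplus> (a \<ominus> d) \<otimes> c (Suc t)" unfolding stair_def by simp
  finally show ?thesis by simp
qed

lemma stair_kernel_upper_eq_diag:
  assumes abd: "a \<in> carrier R" "b \<in> carrier R" and da: "d = a" and db: "d \<noteq> b" and d0: "d \<noteq> \<zero>"
    and c: "\<And>u. u < N \<Longrightarrow> c u \<in> carrier R"
    and rows: "\<And>t. t < N \<Longrightarrow> (\<Oplus>u\<in>{..<N}. stair a b d t u \<otimes> c u) = \<zero>"
    and t: "t < N"
  shows "c t = \<zero>"
proof -
  have dc: "d \<in> carrier R" using da abd by simp
  have early: "c s = \<zero>" if s: "Suc s < N" for s
  proof -
    have "(d \<ominus> b) \<otimes> c s \<oplus> (a \<ominus> d) \<otimes> c (Suc s) = \<zero>"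
      using stair_kernel_consecutive[OF abd dc c rows s] .
    moreover have "a \<ominus> d = \<zero>" using da abd by simp
    ultimately have "(d \<ominus> b) \<otimes> c s = \<zero>" using c[of "Suc s"] c[of s] s abd dc by simp
    moreover have "d \<ominus> b \<noteq> \<zero>" using db dc abd by simp
    ultimately show ?thesis using integral_iff c[of s] s dc abd by auto
  qed
  show ?thesis
  proof (cases "Suc t < N")
    case True then show ?thesis using early by blast
  next
    case False
    then have tN: "t = N - 1" using t by auto
    have "(\<Oplus>u\<in>{..<N}. stair a b d t u \<otimes> c u) = stair a b d t t \<otimes> c t"
    proof (rule finsum_eq_single)
      show "(\<lambda>u. stair a b d t u \<otimes> c u) \<in> {..<N} \<rightarrow> carrier R"
        using stair_closed[OF abd dc] c by auto
      fix u assume "u \<in> {..<N}" "u \<noteq> t"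
      then have "Suc u < N" using tN by auto
      then show "stair a b d t u \<otimes> c u = \<zero>" using early stair_closed[OF abd dc] by auto
    qed (use t in auto)
    then have "d \<otimes> c t = \<zero>" using rows[OF t] unfolding stair_def by simp
    then show ?thesis using d0 integral_iff c[OF t] dc by auto
  qed
qed

lemma stair_kernel_geometric:
  assumes abd: "a \<in> carrier R" "b \<in> carrier R" "d \<in> carrier R" and da: "d \<noteq> a"
    and c: "\<And>u. u < N \<Longrightarrow> c u \<in> carrier R"
    and rows: "\<And>t. t < N \<Longrightarrow> (\<Oplus>u\<in>{..<N}. stair a b d t u \<otimes> c u) = \<zero>"
    and s: "s < N"
  shows "c s = ((d \<ominus> b) \<otimes> inv (d \<ominus> a)) [^] s \<otimes> c 0"
  using s
proof (induction s)
  case 0 then show ?case using c[of 0] by simp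
next
  case (Suc s)
  define e where "e = d \<ominus> a"
  define \<rho> where "\<rho> = (d \<ominus> b) \<otimes> inv e"
  have ec: "e \<in> carrier R" and e0: "e \<noteq> \<zero>" unfolding e_def using da abd by auto
  note iv = nonzero_inverse[OF ec e0]
  have \<rho>c: "\<rho> \<in> carrier R" unfolding \<rho>_def using abd iv by auto
  have cs: "c s \<in> carrier R" "c (Suc s) \<in> carrier R" "c 0 \<in> carrier R" using c Suc.prems by auto
  have "(d \<ominus> b) \<otimes> c s \<oplus> (a \<ominus> d) \<otimes> c (Suc s) = \<zero>"
    using stair_kernel_consecutive[OF abd c rows Suc.prems] .
  then have "(d \<ominus> b) \<otimes> c s = \<ominus> ((a \<ominus> d) \<otimes> c (Suc s))"
    using sum_zero_eq_neg cs abd by auto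
  also have "\<dots> = e \<otimes> c (Suc s)" unfolding e_def using cs abd by algebra
  finally have E: "(d \<ominus> b) \<otimes> c s = e \<otimes> c (Suc s)" .
  have "\<rho> \<otimes> c s = inv e \<otimes> ((d \<ominus> b) \<otimes> c s)"
    unfolding \<rho>_def using cs abd iv by algebra
  also have "\<dots> = inv e \<otimes> (e \<otimes> c (Suc s))" using E by simp
  also have "\<dots> = (inv e \<otimes> e) \<otimes> c (Suc s)" by (rule m_assoc[symmetric]) (use iv ec cs in auto)
  finally have "c (Suc s) = \<rho> \<otimes> c s" using iv cs by simp
  also have "\<dots> = \<rho> \<otimes> (\<rho> [^] s \<otimes> c 0)" using Suc by (simp add: \<rho>_def e_def)
  also have "\<dots> = \<rho> [^] Suc s \<otimes> c 0" using \<rho>c cs by (simp add: nat_pow_Suc2 m_assoc m_lcomm)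
  finally show ?case by (simp add: \<rho>_def e_def)
qed

lemma stair_first_row:
  assumes abd: "a \<in> carrier R" "b \<in> carrier R" "d \<in> carrier R"
    and c: "\<And>u. u < N \<Longrightarrow> c u \<in> carrier R" and N: "0 < N"
  shows "(\<Oplus>u\<in>{..<N}. stair a b d 0 u \<otimes> c u) = a \<otimes> (\<Oplus>u\<in>{..<N}. c u) \<oplus> (d \<ominus> a) \<otimes> c 0"
proof -
  have "(\<Oplus>u\<in>{..<N}. stair a b d 0 u \<otimes> c u)
      = (\<Oplus>u\<in>{..<N}. a \<otimes> c u \<oplus> (if u = 0 then (d \<ominus> a) \<otimes> c u else \<zero>))"
  proof (intro finsum_cong')
    fix u assume "u \<in> {..<N}"
    then have cu: "c u \<in> carrier R" using c by auto
    show "stair a b d 0 u \<otimes> c u = a \<otimes> c u \<oplus> (if u = 0 then (d \<ominus> a) \<otimes> c u else \<zero>)"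
      unfolding stair_def using cu abd by (cases "u = 0") (simp, algebra, simp)
  qed (use c abd in auto)
  also have "\<dots> = (\<Oplus>u\<in>{..<N}. a \<otimes> c u) \<oplus> (\<Oplus>u\<in>{..<N}. (if u = 0 then (d \<ominus> a) \<otimes> c u else \<zero>))"
    using c abd by (subst finsum_addf) auto
  also have "(\<Oplus>u\<in>{..<N}. (if u = 0 then (d \<ominus> a) \<otimes> c u else \<zero>)) = (d \<ominus> a) \<otimes> c 0"
    using c abd N by (subst finsum_eq_single[of _ 0]) auto
  also have "(\<Oplus>u\<in>{..<N}. a \<otimes> c u) = a \<otimes> (\<Oplus>u\<in>{..<N}. c u)"
    using c abd by (subst finsum_rdistr) auto
  finally show ?thesis .
qed

text \<open>Kernel vectors are geometric with ratio \<open>\<rho> = (d - b) / (d - a)\<close>. For \<open>\<rho> \<noteq> 0\<close> the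
  progression sums to zero because \<open>q (q - 1)\<close> divides \<open>N\<close>, and the first row then forces
  \<open>c 0 = 0\<close>.\<close>

lemma stair_kernel_upper_ne_diag:
  assumes fin: "finite (carrier R)" and dvd: "card (carrier R) * (card (carrier R) - 1) dvd N"
    and abd: "a \<in> carrier R" "b \<in> carrier R" "d \<in> carrier R"
    and da: "d \<noteq> a" and db: "d = b \<Longrightarrow> d \<noteq> \<zero>"
    and c: "\<And>u. u < N \<Longrightarrow> c u \<in> carrier R"
    and rows: "\<And>t. t < N \<Longrightarrow> (\<Oplus>u\<in>{..<N}. stair a b d t u \<otimes> c u) = \<zero>"
    and t: "t < N"
  shows "c t = \<zero>"
proof -
  define \<rho> where "\<rho> = (d \<ominus> b) \<otimes> inv (d \<ominus> a)"
  have e0: "d \<ominus> a \<noteq> \<zero>" using da abd by simp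
  note iv = nonzero_inverse[OF minus_closed[OF abd(3,1)] e0]
  have \<rho>c: "\<rho> \<in> carrier R" unfolding \<rho>_def using abd iv by auto
  have N: "0 < N" using t by simp
  have c0c: "c 0 \<in> carrier R" using c N by auto
  have pw: "\<And>s. s < N \<Longrightarrow> c s = \<rho> [^] s \<otimes> c 0"
    unfolding \<rho>_def using stair_kernel_geometric[OF abd da c rows] .
  have row0: "a \<otimes> (\<Oplus>u\<in>{..<N}. c u) \<oplus> (d \<ominus> a) \<otimes> c 0 = \<zero>"
    using stair_first_row[OF abd c N] rows[OF N] by simp
  have "c 0 = \<zero>"
  proof (cases "\<rho> = \<zero>")
    case True
    then have "d \<ominus> b = \<zero>"
      unfolding \<rho>_def using integral_iff[OF minus_closed[OF abd(3,2)] iv(1)] iv(4) by simp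
    then have d0: "d \<noteq> \<zero>" using db abd by simp
    have "(\<Oplus>u\<in>{..<N}. c u) = c 0"
    proof (rule finsum_eq_single)
      fix u assume "u \<in> {..<N}" "u \<noteq> 0"
      then have "c u = \<rho> [^] u \<otimes> c 0" using pw by blast
      moreover have "\<rho> [^] u = \<zero>" using True \<open>u \<noteq> 0\<close> by (cases u) (auto simp: nat_pow_Suc2)
      ultimately show "c u = \<zero>" using c0c by simp
    qed (use N c in auto)
    then have "a \<otimes> c 0 \<oplus> (d \<ominus> a) \<otimes> c 0 = \<zero>" using row0 by simp
    moreover have "a \<otimes> c 0 \<oplus> (d \<ominus> a) \<otimes> c 0 = d \<otimes> c 0" using abd c0c by algebra
    ultimately show ?thesis using d0 integral_iff abd c0c by auto
  next
    case False
    have "(\<Oplus>u\<in>{..<N}. c u) = (\<Oplus>u\<in>{..<N}. \<rho> [^] u \<otimes> c 0)"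
    proof (intro finsum_cong')
      show "c u = \<rho> [^] u \<otimes> c 0" if "u \<in> {..<N}" for u using pw that by blast
    qed (use \<rho>c c0c in auto)
    also have "\<dots> = (\<Oplus>u\<in>{..<N}. \<rho> [^] u) \<otimes> c 0"
      using \<rho>c c0c by (subst finsum_ldistr) auto
    also have "(\<Oplus>u\<in>{..<N}. \<rho> [^] u) = \<zero>" using geometric_sum_vanishes[OF fin \<rho>c False dvd] .
    finally have "(d \<ominus> a) \<otimes> c 0 = \<zero>" using row0 abd c0c by simp
    then show ?thesis using e0 integral_iff abd c0c by auto
  qed
  then show ?thesis using pw[OF t] \<rho>c by simp
qed

lemma stair_kernel_trivial:
  assumes fin: "finite (carrier R)" and dvd: "card (carrier R) * (card (carrier R) - 1) dvd N"
    and abd: "a \<in> carrier R" "b \<in> carrier R" "d \<in> carrier R"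
    and nondeg: "d \<noteq> \<zero> \<or> (d \<noteq> a \<and> d \<noteq> b)" "d \<noteq> a \<or> d \<noteq> b"
    and c: "\<And>u. u < N \<Longrightarrow> c u \<in> carrier R"
    and rows: "\<And>t. t < N \<Longrightarrow> (\<Oplus>u\<in>{..<N}. stair a b d t u \<otimes> c u) = \<zero>"
    and t: "t < N"
  shows "c t = \<zero>"
proof (cases "d = a")
  case True
  with nondeg have "d \<noteq> b" "d \<noteq> \<zero>" by auto
  with True show ?thesis using stair_kernel_upper_eq_diag[OF abd(1,2) _ _ _ c rows t] by simp
next
  case False
  with nondeg have "d = b \<Longrightarrow> d \<noteq> \<zero>" by auto
  with False show ?thesis using stair_kernel_upper_ne_diag[OF fin dvd abd _ _ c rows t] by simp
qed

end

section \<open>Staircases in matrices with distinct rows\<close>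

lemma sorted_enumeration:
  fixes U :: "nat set"
  assumes "finite U"
  obtains g where "bij_betw g {..<card U} U" "strict_mono_on {..<card U} g"
proof
  let ?l = "sorted_list_of_set U"
  show "bij_betw (\<lambda>t. ?l ! t) {..<card U} U"
    using assms by (metis bij_betw_nth distinct_sorted_list_of_set length_sorted_list_of_set
        set_sorted_list_of_set)
  show "strict_mono_on {..<card U} (\<lambda>t. ?l ! t)"
    using assms by (intro strict_mono_onI) (simp add: sorted_wrt_nth_less)
qed

lemma inj_on_case_nat:
  assumes "inj_on f {..<L}" "a \<notin> f ` {..<L}"
  shows "inj_on (case_nat a f) {..<Suc L}"
  using assms unfolding inj_on_def by (auto split: nat.splits)

lemma card_fibre_ge:
  assumes fV: "finite V" and AV: "\<And>x. x \<in> R \<Longrightarrow> f x \<in> V"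
    and q: "0 < q" "card V \<le> q" and m: "0 < m" and R: "q * m \<le> card R"
  obtains v where "v \<in> V" "m \<le> card {x \<in> R. f x = v}"
proof -
  have "\<exists>v\<in>V. m \<le> card {x \<in> R. f x = v}"
  proof (rule ccontr)
    assume "\<not> ?thesis"
    then have small: "\<And>v. v \<in> V \<Longrightarrow> card {x \<in> R. f x = v} \<le> m - 1" by force
    have "(\<Union>v\<in>V. {x \<in> R. f x = v}) = R" using AV by auto
    then have "card R \<le> (\<Sum>v\<in>V. card {x \<in> R. f x = v})"
      using card_UN_le[OF fV, of "\<lambda>v. {x \<in> R. f x = v}"] by simp
    also have "\<dots> \<le> card V * (m - 1)" using sum_mono[OF small] by simp
    also have "\<dots> \<le> q * (m - 1)" using q by simp
    also have "\<dots> < q * m" using q m by simp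
    finally show False using R by simp
  qed
  then show ?thesis using that by blast
qed

definition staircase ::
    "('r \<Rightarrow> 'c \<Rightarrow> 'v) \<Rightarrow> 'r set \<Rightarrow> 'c set \<Rightarrow> nat \<Rightarrow> (nat \<Rightarrow> 'r) \<Rightarrow> (nat \<Rightarrow> 'c) \<Rightarrow> (nat \<Rightarrow> 'v) \<Rightarrow> bool"
  where "staircase A R C L xs ys w \<longleftrightarrow> inj_on xs {..<L} \<and> inj_on ys {..<L} \<and>
    (\<forall>i<L. xs i \<in> R \<and> ys i \<in> C \<and> A (xs i) (ys i) \<noteq> w i \<and> (\<forall>j<L. i < j \<longrightarrow> A (xs j) (ys i) = w i))"

lemma staircase_Cons:
  assumes st: "staircase A R' (C - {y}) L xs ys w"
    and R': "R' \<subseteq> {x' \<in> R. A x' y = v}" and x: "x \<in> R" "A x y \<noteq> v" and y: "y \<in> C"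
  shows "staircase A R C (Suc L) (case_nat x xs) (case_nat y ys) (case_nat v w)"
proof -
  have xs: "\<And>i. i < L \<Longrightarrow> xs i \<in> R \<and> A (xs i) y = v" and ys: "\<And>i. i < L \<Longrightarrow> ys i \<in> C - {y}"
    using st R' unfolding staircase_def by auto
  have "inj_on (case_nat x xs) {..<Suc L}"
    using st x xs by (intro inj_on_case_nat) (auto simp: staircase_def)
  moreover have "inj_on (case_nat y ys) {..<Suc L}"
    using st ys by (intro inj_on_case_nat) (auto simp: staircase_def)
  moreover have "\<forall>i<Suc L. case_nat x xs i \<in> R \<and> case_nat y ys i \<in> C
      \<and> A (case_nat x xs i) (case_nat y ys i) \<noteq> case_nat v w i
      \<and> (\<forall>j<Suc L. i < j \<longrightarrow> A (case_nat x xs j) (case_nat y ys i) = case_nat v w i)"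
    using st x y xs ys unfolding staircase_def by (auto split: nat.splits)
  ultimately show ?thesis unfolding staircase_def by blast
qed

text \<open>Distinct rows over an alphabet of at most \<open>q\<close> letters: choose a column separating two
  rows, pass to its most popular value and recurse on the remaining columns.\<close>

lemma staircase_exists:
  fixes A :: "'r \<Rightarrow> 'c \<Rightarrow> 'v"
  assumes q: "2 \<le> q" and fV: "finite V" and cV: "card V \<le> q"
    and fR: "finite R" and cR: "q ^ L \<le> card R" and AV: "\<And>x y. x \<in> R \<Longrightarrow> y \<in> C \<Longrightarrow> A x y \<in> V"
    and rows: "\<And>x x'. x \<in> R \<Longrightarrow> x' \<in> R \<Longrightarrow> x \<noteq> x' \<Longrightarrow> \<exists>y\<in>C. A x y \<noteq> A x' y"
  shows "\<exists>xs ys w. staircase A R C L xs ys w"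
  using fR cR AV rows
proof (induction L arbitrary: R C)
  case 0 then show ?case by (auto simp: staircase_def)
next
  case (Suc L)
  have "q \<le> q ^ Suc L" using q by (intro self_le_power) auto
  then have "\<not> card R \<le> Suc 0" using Suc.prems(2) q by linarith
  then obtain x0 x1 where x01: "x0 \<in> R" "x1 \<in> R" "x0 \<noteq> x1"
    using card_le_Suc0_iff_eq[OF Suc.prems(1)] by blast
  then obtain y where y: "y \<in> C" "A x0 y \<noteq> A x1 y" using Suc.prems(4) by blast
  obtain v where v: "v \<in> V" "q ^ L \<le> card {x \<in> R. A x y = v}"
    using card_fibre_ge[OF fV, where R = R and f = "\<lambda>x. A x y" and q = q and m = "q ^ L"] Suc.prems(2,3) y q cV
    by auto
  obtain x where x: "x \<in> R" "A x y \<noteq> v" using x01 y by metis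
  have "\<exists>xs ys w. staircase A {x \<in> R. A x y = v} (C - {y}) L xs ys w"
  proof (rule Suc.IH)
    show "finite {x \<in> R. A x y = v}" using Suc.prems(1) by simp
    show "\<And>x' x''. x' \<in> {x \<in> R. A x y = v} \<Longrightarrow> x'' \<in> {x \<in> R. A x y = v} \<Longrightarrow> x' \<noteq> x''
        \<Longrightarrow> \<exists>y'\<in>C - {y}. A x' y' \<noteq> A x'' y'"
      using Suc.prems(4) by (metis (mono_tags, lifting) DiffI mem_Collect_eq singletonD)
  qed (use v Suc.prems(3) in auto)
  then obtain xs ys w where "staircase A {x \<in> R. A x y = v} (C - {y}) L xs ys w" by blast
  then have "staircase A R C (Suc L) (case_nat x xs) (case_nat y ys) (case_nat v w)"
    by (rule staircase_Cons) (use x y in auto)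
  then show ?case by blast
qed

lemma partn_lst_homogeneous_pairs:
  fixes P :: "nat \<Rightarrow> nat \<Rightarrow> 'c"
  assumes fV: "finite V" and PV: "\<And>i j. i < j \<Longrightarrow> j < L \<Longrightarrow> P i j \<in> V"
    and ram: "partn_lst {..<L} (replicate (card V) n) 2"
  obtains H T where "H \<subseteq> {..<L}" "finite H" "card H = n" "\<And>i j. i \<in> H \<Longrightarrow> j \<in> H \<Longrightarrow> i < j \<Longrightarrow> P i j = T"
proof -
  obtain enc where enc: "bij_betw enc V {..<card V}"
    using ex_bij_betw_finite_nat[OF fV] unfolding atLeast0LessThan by blast
  define f where "f S = enc (P (Min S) (Max S))" for S
  have f: "f \<in> nsets {..<L} 2 \<rightarrow> {..<card V}"
  proof
    fix S assume "S \<in> nsets {..<L} 2"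
    then have S0: "S \<subseteq> {..<L}" "card S = 2" unfolding nsets_def by auto
    then obtain x y where xy: "S = {x, y}" "x \<noteq> y" by (meson card_2_iff)
    obtain i j where S: "S = {i, j}" "i < j" "j < L"
    proof (cases "x < y")
      case True then show ?thesis using that[of x y] xy S0 by auto
    next
      case False then have "y < x" using xy by auto
      then show ?thesis using that[of y x] xy S0 by (auto simp: insert_commute)
    qed
    then have "Min S = i" "Max S = j" by auto
    then show "f S \<in> {..<card V}" unfolding f_def using PV[OF S(2,3)] bij_betwE[OF enc] by auto
  qed
  obtain c H where c: "c < length (replicate (card V) n)"
    and H: "H \<in> nsets {..<L} (replicate (card V) n ! c)" and hom: "f ` nsets H 2 \<subseteq> {c}"
    by (rule partn_lstE[OF ram f length_replicate])
  have Hc: "H \<subseteq> {..<L}" "finite H" "card H = n" using H c unfolding nsets_def by auto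
  have "P i j = the_inv_into V enc c" if ij: "i \<in> H" "j \<in> H" "i < j" for i j
  proof -
    have "{i, j} \<in> nsets H 2" using ij by (simp add: nsets_def)
    then have "f {i, j} = c" using hom by blast
    moreover have "Min {i, j} = i" "Max {i, j} = j" using ij by auto
    ultimately have "enc (P i j) = c" unfolding f_def by simp
    moreover have "P i j \<in> V" using PV ij Hc by auto
    ultimately show ?thesis using the_inv_into_f_f[OF bij_betw_imp_inj_on[OF enc]] by metis
  qed
  with Hc that show ?thesis by blast
qed

text \<open>Ramsey's theorem applied to the colouring
  \<open>{i < j} \<mapsto> (A (xs i) (ys i), w i, A (xs i) (ys j))\<close> of a staircase yields a submatrix of
  staircase shape; the largest index of the homogeneous set is only needed to read off \<open>w i\<close>.\<close>

lemma staircase_stair_pattern: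
  fixes A :: "'r \<Rightarrow> 'c \<Rightarrow> 'v"
  assumes st: "staircase A R C L xs ys w" and fV: "finite V"
    and AV: "\<And>i j. i < L \<Longrightarrow> j < L \<Longrightarrow> A (xs i) (ys j) \<in> V"
    and ram: "partn_lst {..<L} (replicate (card V ^ 3) (n + 2)) 2"
  obtains g a b d where "strict_mono_on {..<Suc n} g" "\<And>t. t < Suc n \<Longrightarrow> g t < L"
    "a \<in> V" "b \<in> V" "d \<in> V" "d \<noteq> b"
    "\<And>t' t. t' < Suc n \<Longrightarrow> t < Suc n \<Longrightarrow> A (xs (g t')) (ys (g t)) = stair a b d t' t"
proof -
  have below: "\<And>i j. i < j \<Longrightarrow> j < L \<Longrightarrow> A (xs j) (ys i) = w i"
    and diag: "\<And>i. i < L \<Longrightarrow> A (xs i) (ys i) \<noteq> w i"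
    using st unfolding staircase_def by auto
  define P where "P i j = (A (xs i) (ys i), w i, A (xs i) (ys j))" for i j
  have PV: "P i j \<in> V \<times> V \<times> V" if "i < j" "j < L" for i j
    using AV[of i i] AV[of i j] AV[of j i] below[OF that] that unfolding P_def by auto
  have "card (V \<times> V \<times> V) = card V ^ 3" by (simp add: card_cartesian_product power3_eq_cube)
  then have ram': "partn_lst {..<L} (replicate (card (V \<times> V \<times> V)) (n + 2)) 2" using ram by simp
  obtain H T where H: "H \<subseteq> {..<L}" "finite H" "card H = n + 2"
    and HT: "\<And>i j. i \<in> H \<Longrightarrow> j \<in> H \<Longrightarrow> i < j \<Longrightarrow> P i j = T"
    by (rule partn_lst_homogeneous_pairs[OF _ PV ram']) (use fV in auto)
  obtain d b a where T: "T = (d, b, a)" by (cases T) auto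
  define H' where "H' = H - {Max H}"
  have MH: "Max H \<in> H" using H by (intro Max_in) auto
  have cH': "card H' = Suc n" unfolding H'_def using H MH by simp
  obtain g where g: "bij_betw g {..<Suc n} H'" and mono: "strict_mono_on {..<Suc n} g"
    using sorted_enumeration[of H'] H(2) cH' unfolding H'_def by auto
  have gH: "g t \<in> H" "g t < Max H" "g t < L" if "t < Suc n" for t
  proof -
    have "g t \<in> H'" using g that bij_betwE by blast
    then show "g t \<in> H" "g t < Max H" unfolding H'_def using H(2) by (auto simp: order.not_eq_order_implies_strict)
    then show "g t < L" using H MH by auto
  qed
  have dw: "A (xs (g t)) (ys (g t)) = d" "w (g t) = b" if "t < Suc n" for t
    using HT[of "g t" "Max H"] gH[OF that] MH unfolding T P_def by auto
  have above: "A (xs (g t')) (ys (g t)) = a" if "t' < t" "t < Suc n" for t' t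
    using HT[of "g t'" "g t"] gH that strict_mono_onD[OF mono] unfolding T P_def by auto
  have under: "A (xs (g t')) (ys (g t)) = b" if "t < t'" "t' < Suc n" for t' t
    using below[of "g t" "g t'"] dw(2)[of t] gH that strict_mono_onD[OF mono] by auto
  show thesis
  proof (rule that[OF mono, of a b d])
    show "\<And>t. t < Suc n \<Longrightarrow> g t < L" using gH by blast
    have "T \<in> V \<times> V \<times> V" using HT[of "g 0" "Max H"] PV[of "g 0" "Max H"] gH[of 0] MH H by auto
    then show "a \<in> V" "b \<in> V" "d \<in> V" unfolding T by auto
    show "d \<noteq> b" using diag[of "g 0"] dw[of 0] gH[of 0] by auto
    show "A (xs (g t')) (ys (g t)) = stair a b d t' t" if "t' < Suc n" "t < Suc n" for t' t
      using dw above under that unfolding stair_def by (cases "t < t'"; cases "t = t'") auto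
  qed
qed

definition block :: "nat \<Rightarrow> nat \<Rightarrow> nat set" where
  "block s i = {(i - 1) * s ..< i * s}"

lemma block_subset: "i \<in> {1..k} \<Longrightarrow> block s i \<subseteq> {..<k * s}"
  unfolding block_def by (auto intro: less_le_trans)

lemma card_block: "0 < i \<Longrightarrow> card (block s i) = s"
  unfolding block_def by (cases i) (auto simp: diff_mult_distrib)

lemma block_disjoint:
  assumes "i \<in> {1..k}" "j \<in> {1..k}" "i \<noteq> j"
  shows "block s i \<inter> block s j = {}"
proof -
  have le: "i * s \<le> (j - 1) * s" if "i < j" for i j :: nat using that by (intro mult_le_mono1) auto
  have "i * s \<le> (j - 1) * s \<or> j * s \<le> (i - 1) * s"
    using le[of i j] le[of j i] assms(3) by (cases "i < j") auto
  then show ?thesis unfolding block_def by auto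
qed

lemma card_UN_block:
  assumes "Z \<subseteq> {1..k}"
  shows "card (\<Union>i\<in>Z. block s i) = card Z * s"
proof -
  have "card (\<Union>i\<in>Z. block s i) = (\<Sum>i\<in>Z. card (block s i))"
    using assms block_disjoint finite_subset[OF assms] by (intro card_UN_disjoint) (auto simp: block_def)
  also have "\<dots> = (\<Sum>i\<in>Z. s)" using assms by (intro sum.cong) (auto simp: card_block)
  finally show ?thesis by simp
qed

section \<open>Represented matroids\<close>

locale represented_matroid = field R for R :: "('a, 'b) ring_scheme" (structure) +
  fixes E :: "'e set" and Ind :: "'e set \<Rightarrow> bool" and r :: nat and v :: "'e \<Rightarrow> nat \<Rightarrow> 'a"
  assumes matroid: "matroid E Ind"
    and v_closed: "\<And>x i. x \<in> E \<Longrightarrow> i < r \<Longrightarrow> v x i \<in> carrier R"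
    and indep_iff: "\<And>X. Ind X \<longleftrightarrow> X \<subseteq> E \<and> lin_indep_cols R r v X"
begin

lemma finite_E: "finite E" using matroid unfolding matroid_def by blast

lemma indep_subset: "Ind X \<Longrightarrow> X \<subseteq> E" using indep_iff by blast

lemma indep_finite: "Ind X \<Longrightarrow> finite X" using indep_subset finite_E finite_subset by blast

lemma indep_coeffs_zero:
  assumes "Ind X" "c \<in> X \<rightarrow> carrier R" "\<And>i. i < r \<Longrightarrow> (\<Oplus>x\<in>X. c x \<otimes> v x i) = \<zero>" "x \<in> X"
  shows "c x = \<zero>"
  using assms indep_iff unfolding lin_indep_cols_def by blast

lemma indep_coeffs_unique:
  assumes "Ind B" "\<alpha> \<in> B \<rightarrow> carrier R" "\<beta> \<in> B \<rightarrow> carrier R"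
    "\<And>i. i < r \<Longrightarrow> (\<Oplus>x\<in>B. \<alpha> x \<otimes> v x i) = (\<Oplus>x\<in>B. \<beta> x \<otimes> v x i)" "x \<in> B"
  shows "\<alpha> x = \<beta> x"
proof -
  have fB: "finite B" using assms indep_finite by blast
  have sB: "B \<subseteq> E" using assms indep_subset by blast
  have "\<alpha> x \<ominus> \<beta> x = \<zero>"
  proof (rule indep_coeffs_zero[OF assms(1), of "\<lambda>x. \<alpha> x \<ominus> \<beta> x"])
    show "(\<lambda>x. \<alpha> x \<ominus> \<beta> x) \<in> B \<rightarrow> carrier R" using assms by auto
    fix i assume i: "i < r"
    have vB: "\<And>x. x \<in> B \<Longrightarrow> v x i \<in> carrier R" using sB v_closed i by blast
    have aB: "\<And>x. x \<in> B \<Longrightarrow> \<alpha> x \<in> carrier R" "\<And>x. x \<in> B \<Longrightarrow> \<beta> x \<in> carrier R" using assms by auto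
    have "(\<Oplus>x\<in>B. (\<alpha> x \<ominus> \<beta> x) \<otimes> v x i) = (\<Oplus>x\<in>B. \<alpha> x \<otimes> v x i \<ominus> \<beta> x \<otimes> v x i)"
      using vB aB by (intro finsum_cong') (auto simp: l_minus minus_eq l_distr)
    also have "\<dots> = \<zero>"
    proof -
      have cl: "(\<Oplus>x\<in>B. \<beta> x \<otimes> v x i) \<in> carrier R" using vB aB by (intro finsum_closed) auto
      show ?thesis using assms(4)[OF i] vB aB fB cl
        by (subst finsum_minus) (auto simp: r_right_minus_eq)
    qed
    finally show "(\<Oplus>x\<in>B. (\<alpha> x \<ominus> \<beta> x) \<otimes> v x i) = \<zero>" .
  qed (use assms in auto)
  moreover have "\<alpha> x \<in> carrier R" "\<beta> x \<in> carrier R" using assms by auto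
  ultimately show ?thesis using r_right_minus_eq by blast
qed

lemma dependent_insert_combination:
  assumes B: "Ind B" and e: "e \<in> E" and dep: "\<not> Ind (insert e B)"
  shows "\<exists>a. a \<in> B \<rightarrow> carrier R \<and> (\<forall>i<r. v e i = (\<Oplus>x\<in>B. a x \<otimes> v x i))"
proof -
  have fB: "finite B" and sB: "B \<subseteq> E" using B indep_finite indep_subset by auto
  have eB: "e \<notin> B" using B dep by (metis insert_absorb)
  have vB: "\<And>x i. x \<in> B \<Longrightarrow> i < r \<Longrightarrow> v x i \<in> carrier R" using sB v_closed by blast
  obtain c where c: "\<forall>x\<in>insert e B. c x \<in> carrier R"
    and rel: "\<forall>i<r. (\<Oplus>x\<in>insert e B. c x \<otimes> v x i) = \<zero>" and nz: "\<exists>x\<in>insert e B. c x \<noteq> \<zero>"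
    using dep indep_iff sB e unfolding lin_indep_cols_def by blast
  define S where "S i = (\<Oplus>x\<in>B. c x \<otimes> v x i)" for i
  have S: "\<And>i. i < r \<Longrightarrow> S i \<in> carrier R" unfolding S_def using c vB by (auto intro: finsum_closed)
  have relB: "c e \<otimes> v e i \<oplus> S i = \<zero>" if i: "i < r" for i
    using rel[rule_format, OF i] c fB eB v_closed[OF e i] vB[OF _ i] unfolding S_def
    by (subst (asm) finsum_insert) auto
  have ce: "c e \<noteq> \<zero>"
  proof
    assume c0: "c e = \<zero>"
    have "c x = \<zero>" if x: "x \<in> B" for x
    proof (rule indep_coeffs_zero[OF B _ _ x])
      show "c \<in> B \<rightarrow> carrier R" using c by auto
      show "\<And>i. i < r \<Longrightarrow> (\<Oplus>x\<in>B. c x \<otimes> v x i) = \<zero>"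
        using relB c0 S v_closed[OF e] unfolding S_def by simp
    qed
    then show False using nz c0 by auto
  qed
  have ce': "c e \<in> carrier R" using c by auto
  note inv = nonzero_inverse[OF ce' ce]
  show ?thesis
  proof (intro exI conjI allI impI)
    show "(\<lambda>x. \<ominus> (inv (c e) \<otimes> c x)) \<in> B \<rightarrow> carrier R" using c inv by auto
    fix i assume i: "i < r"
    have "(\<Oplus>x\<in>B. \<ominus> (inv (c e) \<otimes> c x) \<otimes> v x i) = (\<Oplus>x\<in>B. \<ominus> (inv (c e) \<otimes> (c x \<otimes> v x i)))"
      using vB[OF _ i] c inv by (intro finsum_cong') (auto simp: l_minus m_assoc)
    also have "\<dots> = \<ominus> (inv (c e) \<otimes> S i)"
      unfolding S_def using vB[OF _ i] c inv fB by (simp add: finsum_uminus finsum_rdistr)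
    also have "\<dots> = v e i"
      using eq_neg_inv_mult[OF ce' ce v_closed[OF e i] S[OF i] relB[OF i]] by simp
    finally show "v e i = (\<Oplus>x\<in>B. \<ominus> (inv (c e) \<otimes> c x) \<otimes> v x i)" by simp
  qed
qed

lemma basis_coords_exist:
  assumes B: "basis E Ind B" and e: "e \<in> E"
  shows "\<exists>a. a \<in> B \<rightarrow> carrier R \<and> (\<forall>i<r. v e i = (\<Oplus>x\<in>B. a x \<otimes> v x i))"
proof (cases "e \<in> B")
  case True
  have iB: "Ind B" using B unfolding basis_def by blast
  have "v e i = (\<Oplus>x\<in>B. (if x = e then \<one> else \<zero>) \<otimes> v x i)" if i: "i < r" for i
  proof -
    have vB: "\<And>x. x \<in> B \<Longrightarrow> v x i \<in> carrier R" using iB indep_subset v_closed i by blast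
    then show ?thesis using True indep_finite[OF iB] by (subst finsum_eq_single[of _ e]) auto
  qed
  then show ?thesis by (intro exI[of _ "\<lambda>x. if x = e then \<one> else \<zero>"]) auto
next
  case False
  then show ?thesis
    using B dependent_insert_combination[OF _ e] unfolding basis_def by blast
qed

lemma finsum_expand_columns:
  assumes fY: "finite Y" and sB: "B \<subseteq> E" and fB: "finite B" and i: "i < r"
    and c: "c \<in> Y \<rightarrow> carrier R"
    and Ac: "\<And>z w. z \<in> Y \<Longrightarrow> w \<in> B \<Longrightarrow> A w z \<in> carrier R"
    and rep: "\<And>z. z \<in> Y \<Longrightarrow> v z i = (\<Oplus>w\<in>B. A w z \<otimes> v w i)"
  shows "(\<Oplus>z\<in>Y. c z \<otimes> v z i) = (\<Oplus>w\<in>B. (\<Oplus>z\<in>Y. c z \<otimes> A w z) \<otimes> v w i)"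
proof -
  have vB: "\<And>w. w \<in> B \<Longrightarrow> v w i \<in> carrier R" using sB v_closed i by blast
  have cY: "\<And>z. z \<in> Y \<Longrightarrow> c z \<in> carrier R" using c by auto
  have "(\<Oplus>z\<in>Y. c z \<otimes> v z i) = (\<Oplus>z\<in>Y. \<Oplus>w\<in>B. c z \<otimes> A w z \<otimes> v w i)"
  proof (intro finsum_cong')
    fix z assume z: "z \<in> Y"
    then have cz: "c z \<in> carrier R" and Az: "\<And>w. w \<in> B \<Longrightarrow> A w z \<in> carrier R" using cY Ac by auto
    have "c z \<otimes> v z i = (\<Oplus>w\<in>B. c z \<otimes> (A w z \<otimes> v w i))"
      using rep[OF z] cz Az vB fB by (simp add: finsum_rdistr)
    also have "\<dots> = (\<Oplus>w\<in>B. c z \<otimes> A w z \<otimes> v w i)"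
      using cz Az vB by (intro finsum_cong') (auto simp: m_assoc)
    finally show "c z \<otimes> v z i = (\<Oplus>w\<in>B. c z \<otimes> A w z \<otimes> v w i)" .
  qed (use cY Ac vB in \<open>auto intro!: finsum_closed\<close>)
  also have "\<dots> = (\<Oplus>w\<in>B. \<Oplus>z\<in>Y. c z \<otimes> A w z \<otimes> v w i)"
    using fY fB cY Ac vB by (intro finsum_swap) auto
  also have "\<dots> = (\<Oplus>w\<in>B. (\<Oplus>z\<in>Y. c z \<otimes> A w z) \<otimes> v w i)"
  proof (intro finsum_cong')
    fix w assume w: "w \<in> B"
    show "(\<Oplus>z\<in>Y. c z \<otimes> A w z \<otimes> v w i) = (\<Oplus>z\<in>Y. c z \<otimes> A w z) \<otimes> v w i"
      using cY Ac[OF _ w] vB[OF w] fY by (subst finsum_ldistr) auto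
  qed (use cY Ac vB in \<open>auto intro!: finsum_closed\<close>)
  finally show ?thesis .
qed

lemma exchange_combination:
  assumes B: "Ind B" and YE: "Y \<subseteq> E" and YB: "Y \<inter> B = {}"
    and Ac: "\<And>z w. z \<in> Y \<Longrightarrow> w \<in> B \<Longrightarrow> A w z \<in> carrier R"
    and rep: "\<And>z. z \<in> Y \<Longrightarrow> v z i = (\<Oplus>w\<in>B. A w z \<otimes> v w i)"
    and c: "c \<in> (B - X) \<union> Y \<rightarrow> carrier R" and i: "i < r"
  shows "(\<Oplus>x\<in>(B - X) \<union> Y. c x \<otimes> v x i)
    = (\<Oplus>w\<in>B. ((if w \<in> X then \<zero> else c w) \<oplus> (\<Oplus>y\<in>Y. c y \<otimes> A w y)) \<otimes> v w i)"
proof -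
  have fB: "finite B" and sB: "B \<subseteq> E" using B indep_finite indep_subset by auto
  have fY: "finite Y" using YE finite_E finite_subset by blast
  have vB: "\<And>x. x \<in> B \<Longrightarrow> v x i \<in> carrier R" and vY: "\<And>x. x \<in> Y \<Longrightarrow> v x i \<in> carrier R"
    using sB YE v_closed i by blast+
  let ?ct = "\<lambda>w. if w \<in> X then \<zero> else c w"
  have ct: "\<And>w. w \<in> B \<Longrightarrow> ?ct w \<in> carrier R" using c by auto
  have SY: "\<And>w. w \<in> B \<Longrightarrow> (\<Oplus>y\<in>Y. c y \<otimes> A w y) \<in> carrier R"
    using c Ac by (auto intro!: finsum_closed)
  have "(\<Oplus>x\<in>(B - X) \<union> Y. c x \<otimes> v x i) = (\<Oplus>x\<in>B - X. c x \<otimes> v x i) \<oplus> (\<Oplus>x\<in>Y. c x \<otimes> v x i)"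
    using fB fY YB c vB vY by (subst finsum_Un_disjoint) auto
  also have "(\<Oplus>x\<in>B - X. c x \<otimes> v x i) = (\<Oplus>w\<in>B. ?ct w \<otimes> v w i)"
    using fB vB ct by (intro add.finprod_mono_neutral_cong_left) auto
  also have "(\<Oplus>x\<in>Y. c x \<otimes> v x i) = (\<Oplus>w\<in>B. (\<Oplus>y\<in>Y. c y \<otimes> A w y) \<otimes> v w i)"
    using fY sB fB i c Ac rep by (intro finsum_expand_columns) auto
  also have "(\<Oplus>w\<in>B. ?ct w \<otimes> v w i) \<oplus> (\<Oplus>w\<in>B. (\<Oplus>y\<in>Y. c y \<otimes> A w y) \<otimes> v w i)
      = (\<Oplus>w\<in>B. ?ct w \<otimes> v w i \<oplus> (\<Oplus>y\<in>Y. c y \<otimes> A w y) \<otimes> v w i)"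
    using ct vB SY by (subst finsum_addf) auto
  also have "\<dots> = (\<Oplus>w\<in>B. (?ct w \<oplus> (\<Oplus>y\<in>Y. c y \<otimes> A w y)) \<otimes> v w i)"
    using ct vB SY by (intro finsum_cong') (auto simp: l_distr)
  finally show ?thesis .
qed

lemma exchange_indep:
  assumes B: "Ind B" and XB: "X \<subseteq> B" and YE: "Y \<subseteq> E" and YB: "Y \<inter> B = {}"
    and Ac: "\<And>z w. z \<in> Y \<Longrightarrow> w \<in> B \<Longrightarrow> A w z \<in> carrier R"
    and rep: "\<And>z i. z \<in> Y \<Longrightarrow> i < r \<Longrightarrow> v z i = (\<Oplus>w\<in>B. A w z \<otimes> v w i)"
    and ker: "\<And>c. c \<in> Y \<rightarrow> carrier R \<Longrightarrow> (\<And>x. x \<in> X \<Longrightarrow> (\<Oplus>y\<in>Y. c y \<otimes> A x y) = \<zero>)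
               \<Longrightarrow> (\<And>y. y \<in> Y \<Longrightarrow> c y = \<zero>)"
  shows "Ind ((B - X) \<union> Y)"
proof -
  have sB: "B \<subseteq> E" using B indep_subset by blast
  have "lin_indep_cols R r v ((B - X) \<union> Y)"
    unfolding lin_indep_cols_def
  proof (intro allI impI ballI)
    fix c x
    assume H: "(\<forall>x\<in>(B - X) \<union> Y. c x \<in> carrier R) \<and> (\<forall>i<r. (\<Oplus>x\<in>(B - X) \<union> Y. c x \<otimes> v x i) = \<zero>)"
      and x: "x \<in> (B - X) \<union> Y"
    have c: "c \<in> (B - X) \<union> Y \<rightarrow> carrier R" using H by blast
    define co where "co w = (if w \<in> X then \<zero> else c w) \<oplus> (\<Oplus>y\<in>Y. c y \<otimes> A w y)" for w
    have SY: "\<And>w. w \<in> B \<Longrightarrow> (\<Oplus>y\<in>Y. c y \<otimes> A w y) \<in> carrier R"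
      using c Ac by (auto intro!: finsum_closed)
    have co0: "co w = \<zero>" if w: "w \<in> B" for w
    proof (rule indep_coeffs_zero[OF B _ _ w])
      show "co \<in> B \<rightarrow> carrier R" using c SY unfolding co_def by (auto simp: Pi_iff)
      fix i assume "i < r"
      then show "(\<Oplus>w\<in>B. co w \<otimes> v w i) = \<zero>"
        using exchange_combination[OF B YE YB Ac rep c] H unfolding co_def by simp
    qed
    have cY: "c y = \<zero>" if y: "y \<in> Y" for y
    proof (rule ker[OF _ _ y])
      show "c \<in> Y \<rightarrow> carrier R" using c by auto
      fix x assume "x \<in> X"
      then show "(\<Oplus>y\<in>Y. c y \<otimes> A x y) = \<zero>"
        using co0[of x] XB SY[of x] unfolding co_def by auto
    qed
    show "c x = \<zero>"
    proof (cases "x \<in> Y")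
      case False
      then have xB: "x \<in> B - X" using x by blast
      have "(\<Oplus>y\<in>Y. c y \<otimes> A x y) = (\<Oplus>y\<in>Y. \<zero>)"
        using cY Ac xB by (intro finsum_cong') auto
      then have "(\<Oplus>y\<in>Y. c y \<otimes> A x y) = \<zero>" by simp
      then show ?thesis using co0[of x] xB c unfolding co_def by (auto simp: Pi_iff)
    qed (use cY in blast)
  qed
  moreover have "(B - X) \<union> Y \<subseteq> E" using sB YE by blast
  ultimately show ?thesis using indep_iff by blast
qed

lemma exchange_basis:
  assumes B: "basis E Ind B" and XB: "X \<subseteq> B" and YE: "Y \<subseteq> E" and YB: "Y \<inter> B = {}"
    and card: "card X = card Y"
    and Ac: "\<And>z w. z \<in> Y \<Longrightarrow> w \<in> B \<Longrightarrow> A w z \<in> carrier R"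
    and rep: "\<And>z i. z \<in> Y \<Longrightarrow> i < r \<Longrightarrow> v z i = (\<Oplus>w\<in>B. A w z \<otimes> v w i)"
    and ker: "\<And>c. c \<in> Y \<rightarrow> carrier R \<Longrightarrow> (\<And>x. x \<in> X \<Longrightarrow> (\<Oplus>y\<in>Y. c y \<otimes> A x y) = \<zero>)
               \<Longrightarrow> (\<And>y. y \<in> Y \<Longrightarrow> c y = \<zero>)"
  shows "basis E Ind ((B - X) \<union> Y)"
proof (rule indep_card_eq_basis[OF matroid B])
  have iB: "Ind B" using B unfolding basis_def by blast
  show "Ind ((B - X) \<union> Y)"
    by (rule exchange_indep[OF iB XB YE YB, where A = A]) (use Ac rep ker in auto)
  have fB: "finite B" using iB indep_finite by blast
  have fY: "finite Y" using YE finite_E finite_subset by blast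
  have "card ((B - X) \<union> Y) = card (B - X) + card Y" using fB fY YB by (subst card_Un_disjoint) auto
  also have "card (B - X) = card B - card X" using XB fB by (simp add: card_Diff_subset finite_subset)
  finally show "card ((B - X) \<union> Y) = card B" using card card_mono[OF fB XB] by simp
qed

definition coord :: "'e set \<Rightarrow> 'e \<Rightarrow> 'e \<Rightarrow> 'a" where
  "coord B w e = (SOME a. a \<in> B \<rightarrow> carrier R \<and> (\<forall>i<r. v e i = (\<Oplus>x\<in>B. a x \<otimes> v x i))) w"

lemma coord_spec:
  assumes "basis E Ind B" "e \<in> E"
  shows "(\<lambda>w. coord B w e) \<in> B \<rightarrow> carrier R \<and> (\<forall>i<r. v e i = (\<Oplus>x\<in>B. coord B x e \<otimes> v x i))"
proof -
  define P where "P = (\<lambda>a. a \<in> B \<rightarrow> carrier R \<and> (\<forall>i<r. v e i = (\<Oplus>x\<in>B. a x \<otimes> v x i)))"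
  have "\<exists>a. P a" using basis_coords_exist[OF assms] unfolding P_def by blast
  then have "P (SOME a. P a)" by (rule someI_ex)
  moreover have "(\<lambda>w. coord B w e) = (SOME a. P a)" unfolding coord_def P_def by (rule refl)
  ultimately have "P (\<lambda>w. coord B w e)" by (simp only:)
  then show ?thesis unfolding P_def by blast
qed

lemma coord_closed: "basis E Ind B \<Longrightarrow> e \<in> E \<Longrightarrow> w \<in> B \<Longrightarrow> coord B w e \<in> carrier R"
  using coord_spec by blast

lemma coord_expansion: "basis E Ind B \<Longrightarrow> e \<in> E \<Longrightarrow> i < r \<Longrightarrow> v e i = (\<Oplus>x\<in>B. coord B x e \<otimes> v x i)"
  using coord_spec by blast

lemma coord_basis_elem:
  assumes B: "basis E Ind B" and e: "e \<in> B" and w: "w \<in> B"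
  shows "coord B w e = (if w = e then \<one> else \<zero>)"
proof -
  have iB: "Ind B" using B unfolding basis_def by blast
  have fB: "finite B" using iB indep_finite by blast
  have sB: "B \<subseteq> E" using iB indep_subset by blast
  show ?thesis
  proof (rule indep_coeffs_unique[OF iB _ _ _ w])
    show "(\<lambda>w. coord B w e) \<in> B \<rightarrow> carrier R" using coord_closed[OF B] e sB by blast
    show "(\<lambda>w. if w = e then \<one> else \<zero>) \<in> B \<rightarrow> carrier R" by auto
    fix i assume i: "i < r"
    have vB: "\<And>x. x \<in> B \<Longrightarrow> v x i \<in> carrier R" using sB v_closed i by blast
    have "(\<Oplus>x\<in>B. (if x = e then \<one> else \<zero>) \<otimes> v x i) = v e i"
      using vB e fB by (subst finsum_eq_single[of _ e]) auto
    then show "(\<Oplus>x\<in>B. coord B x e \<otimes> v x i) = (\<Oplus>x\<in>B. (if x = e then \<one> else \<zero>) \<otimes> v x i)"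
      using coord_expansion[OF B _ i, of e] e sB by auto
  qed
qed

lemma coord_rows_distinct:
  assumes B1: "basis E Ind B1" and B2: "basis E Ind B2"
    and x: "x \<in> B1 - B2" and x': "x' \<in> B1 - B2" and xx: "x \<noteq> x'"
  shows "\<exists>y\<in>B2 - B1. coord B1 x y \<noteq> coord B1 x' y"
proof (rule ccontr)
  assume H: "\<not> ?thesis"
  have iB1: "Ind B1" using B1 unfolding basis_def by blast
  have iB2: "Ind B2" using B2 unfolding basis_def by blast
  have fB1: "finite B1" "B1 \<subseteq> E" using iB1 indep_finite indep_subset by auto
  have fB2: "finite B2" "B2 \<subseteq> E" using iB2 indep_finite indep_subset by auto
  have xE: "x \<in> E" using x fB1 by blast
  obtain \<beta> where \<beta>: "\<beta> \<in> B2 \<rightarrow> carrier R" "\<And>i. i < r \<Longrightarrow> v x i = (\<Oplus>z\<in>B2. \<beta> z \<otimes> v z i)"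
    using basis_coords_exist[OF B2 xE] by blast
  define co where "co w = (\<Oplus>z\<in>B2. \<beta> z \<otimes> coord B1 w z)" for w
  have cA: "\<And>z w. z \<in> B2 \<Longrightarrow> w \<in> B1 \<Longrightarrow> coord B1 w z \<in> carrier R" using coord_closed[OF B1] fB2 by blast
  have coc: "co \<in> B1 \<rightarrow> carrier R" unfolding co_def using \<beta> cA by (auto intro!: finsum_closed)
  have eqco: "\<And>w. w \<in> B1 \<Longrightarrow> co w = (if w = x then \<one> else \<zero>)"
  proof (rule indep_coeffs_unique[OF iB1 coc])
    show "(\<lambda>w. if w = x then \<one> else \<zero>) \<in> B1 \<rightarrow> carrier R" by auto
    fix i assume i: "i < r"
    have vB: "\<And>w. w \<in> B1 \<Longrightarrow> v w i \<in> carrier R" using fB1 v_closed i by blast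
    have "(\<Oplus>w\<in>B1. co w \<otimes> v w i) = (\<Oplus>z\<in>B2. \<beta> z \<otimes> v z i)"
      unfolding co_def
      by (rule finsum_expand_columns[symmetric, OF fB2(1) fB1(2) fB1(1) i \<beta>(1) cA coord_expansion[OF B1 _ i]])
         (use fB2 in auto)
    also have "\<dots> = v x i" using \<beta>(2)[OF i] by simp
    also have "\<dots> = (\<Oplus>w\<in>B1. (if w = x then \<one> else \<zero>) \<otimes> v w i)"
      using vB x fB1 by (subst finsum_eq_single[of _ x]) auto
    finally show "(\<Oplus>w\<in>B1. co w \<otimes> v w i) = (\<Oplus>w\<in>B1. (if w = x then \<one> else \<zero>) \<otimes> v w i)" .
  qed
  have "co x = co x'"
    unfolding co_def
  proof (intro finsum_cong')
    fix z assume z: "z \<in> B2"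
    show "\<beta> z \<otimes> coord B1 x z = \<beta> z \<otimes> coord B1 x' z"
    proof (cases "z \<in> B1")
      case True
      then show ?thesis using coord_basis_elem[OF B1 True] x x' z by auto
    next
      case False then show ?thesis using H z by auto
    qed
  next
    show "(\<lambda>z. \<beta> z \<otimes> coord B1 x' z) \<in> B2 \<rightarrow> carrier R" using \<beta> cA x' by auto
  qed simp
  then show False using eqco x x' xx by auto
qed

end

section \<open>The exchange property\<close>

context field
begin

lemma stair_pattern_kernel_trivial:
  assumes fin: "finite (carrier R)" and U: "finite U"
    and dvd: "card (carrier R) * (card (carrier R) - 1) dvd card U"
    and abd: "a \<in> carrier R" "b \<in> carrier R" "d \<in> carrier R"
    and nondeg: "d \<noteq> \<zero> \<or> (d \<noteq> a \<and> d \<noteq> b)" "d \<noteq> a \<or> d \<noteq> b"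
    and iY: "inj_on Y U"
    and pat: "\<And>t' t. t' \<in> U \<Longrightarrow> t \<in> U \<Longrightarrow> M (X t') (Y t) = stair a b d t' t"
    and c: "c \<in> Y ` U \<rightarrow> carrier R"
    and rows: "\<And>t'. t' \<in> U \<Longrightarrow> (\<Oplus>y\<in>Y ` U. c y \<otimes> M (X t') y) = \<zero>"
    and y: "y \<in> Y ` U"
  shows "c y = \<zero>"
proof -
  define N where "N = card U"
  obtain g where g: "bij_betw g {..<N} U" and mono: "strict_mono_on {..<N} g"
    using sorted_enumeration[OF U] unfolding N_def by blast
  have gU: "\<And>t. t < N \<Longrightarrow> g t \<in> U" using g bij_betwE by blast
  have "g ` {..<N} = U" using g bij_betw_imp_surj_on by blast
  then have Yg: "Y ` U = (Y \<circ> g) ` {..<N}" using image_comp[of Y g "{..<N}"] by simp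
  have iYg: "inj_on (Y \<circ> g) {..<N}" using g iY by (simp add: bij_betw_def comp_inj_on)
  define c' where "c' u = c (Y (g u))" for u
  have c': "\<And>u. u < N \<Longrightarrow> c' u \<in> carrier R" unfolding c'_def using c gU by auto
  have Sc: "\<And>t u. stair a b d t u \<in> carrier R" using stair_closed abd by blast
  have rows': "(\<Oplus>u\<in>{..<N}. stair a b d t u \<otimes> c' u) = \<zero>" if t: "t < N" for t
  proof -
    have "\<zero> = (\<Oplus>y\<in>(Y \<circ> g) ` {..<N}. c y \<otimes> M (X (g t)) y)"
      using rows[OF gU[OF t]] unfolding Yg by simp
    also have "\<dots> = (\<Oplus>u\<in>{..<N}. c (Y (g u)) \<otimes> M (X (g t)) (Y (g u)))"
      using c gU pat[OF gU[OF t]] Sc Yg by (subst finsum_reindex[OF _ iYg]) (auto simp: Pi_iff)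
    also have "\<dots> = (\<Oplus>u\<in>{..<N}. stair a b d t u \<otimes> c' u)"
    proof (intro finsum_cong')
      fix u assume u: "u \<in> {..<N}"
      have "M (X (g t)) (Y (g u)) = stair a b d t u"
        using pat gU t u stair_strict_mono_on[OF mono] by auto
      then show "c (Y (g u)) \<otimes> M (X (g t)) (Y (g u)) = stair a b d t u \<otimes> c' u"
        using Sc c'[of u] u unfolding c'_def by (simp add: m_comm)
    qed (use Sc c' in auto)
    finally show ?thesis by simp
  qed
  obtain t where t: "t < N" "y = Y (g t)" using y Yg by auto
  have "c' t = \<zero>"
    by (rule stair_kernel_trivial[OF fin _ abd nondeg c' rows' t(1)]) (use dvd N_def in simp)
  then show "c y = \<zero>" unfolding c'_def using t by simp
qed

end

context represented_matroid
begin

lemma stair_submatrix_exchange_basis: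
  assumes fin: "finite (carrier R)" and B: "basis E Ind B" and U: "finite U"
    and dvd: "card (carrier R) * (card (carrier R) - 1) dvd card U"
    and X: "\<And>t. t \<in> U \<Longrightarrow> X t \<in> B" and Y: "\<And>t. t \<in> U \<Longrightarrow> Y t \<in> E - B"
    and iX: "inj_on X U" and iY: "inj_on Y U"
    and abd: "a \<in> carrier R" "b \<in> carrier R" "d \<in> carrier R"
    and nondeg: "d \<noteq> \<zero> \<or> (d \<noteq> a \<and> d \<noteq> b)" "d \<noteq> a \<or> d \<noteq> b"
    and pat: "\<And>t' t. t' \<in> U \<Longrightarrow> t \<in> U \<Longrightarrow> coord B (X t') (Y t) = stair a b d t' t"
  shows "basis E Ind ((B - X ` U) \<union> Y ` U)"
proof (rule exchange_basis[OF B, where A = "coord B"])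
  show "X ` U \<subseteq> B" using X by blast
  show "Y ` U \<subseteq> E" "Y ` U \<inter> B = {}" using Y by blast+
  show "card (X ` U) = card (Y ` U)" using card_image[OF iX] card_image[OF iY] by simp
  show "\<And>z w. z \<in> Y ` U \<Longrightarrow> w \<in> B \<Longrightarrow> coord B w z \<in> carrier R"
    using coord_closed[OF B] Y by blast
  show "\<And>z i. z \<in> Y ` U \<Longrightarrow> i < r \<Longrightarrow> v z i = (\<Oplus>w\<in>B. coord B w z \<otimes> v w i)"
    using coord_expansion[OF B] Y by blast
  fix c y
  assume c: "c \<in> Y ` U \<rightarrow> carrier R"
    and rows: "\<And>x. x \<in> X ` U \<Longrightarrow> (\<Oplus>y\<in>Y ` U. c y \<otimes> coord B x y) = \<zero>"
    and y: "y \<in> Y ` U"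
  show "c y = \<zero>"
    by (rule stair_pattern_kernel_trivial[where M = "coord B" and X = X, OF fin U dvd abd nondeg iY pat c _ y])
      (use rows in auto)
qed

end

context represented_matroid
begin

lemma stair_pattern_k_exchange:
  assumes fin: "finite (carrier R)" and B1: "basis E Ind B1" and B2: "basis E Ind B2"
    and s: "s = card (carrier R) * (card (carrier R) - 1)"
    and X: "\<And>t. t < k * s \<Longrightarrow> X t \<in> B1 - B2" and Y: "\<And>t. t < k * s \<Longrightarrow> Y t \<in> B2 - B1"
    and iX: "inj_on X {..<k * s}" and iY: "inj_on Y {..<k * s}"
    and abd: "a \<in> carrier R" "b \<in> carrier R" "d \<in> carrier R"
    and nondeg: "d \<noteq> \<zero> \<or> (d \<noteq> a \<and> d \<noteq> b)" "d \<noteq> a \<or> d \<noteq> b"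
    and pat: "\<And>t' t. t' < k * s \<Longrightarrow> t < k * s \<Longrightarrow> coord B1 (X t') (Y t) = stair a b d t' t"
  shows "k_exchange E Ind k B1 B2"
  unfolding k_exchange_def
proof (rule exI[of _ "\<lambda>i. X ` block s i"], rule exI[of _ "\<lambda>i. Y ` block s i"], intro conjI)
  have s0: "0 < s" using card_carrier_ge_two[OF fin] s by simp
  show "\<forall>i\<in>{1..k}. X ` block s i \<noteq> {} \<and> X ` block s i \<subseteq> B1 - B2
      \<and> Y ` block s i \<noteq> {} \<and> Y ` block s i \<subseteq> B2 - B1"
  proof
    fix i assume i: "i \<in> {1..k}"
    then have "block s i \<noteq> {}" "block s i \<subseteq> {..<k * s}"
      using card_block[of i s] s0 block_subset[OF i] by auto
    then show "X ` block s i \<noteq> {} \<and> X ` block s i \<subseteq> B1 - B2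
        \<and> Y ` block s i \<noteq> {} \<and> Y ` block s i \<subseteq> B2 - B1"
      using X Y by auto
  qed
  show "\<forall>i\<in>{1..k}. \<forall>j\<in>{1..k}. i \<noteq> j \<longrightarrow>
      X ` block s i \<inter> X ` block s j = {} \<and> Y ` block s i \<inter> Y ` block s j = {}"
  proof (intro ballI impI)
    fix i j assume i: "i \<in> {1..k}" and j: "j \<in> {1..k}" and ij: "i \<noteq> j"
    show "X ` block s i \<inter> X ` block s j = {} \<and> Y ` block s i \<inter> Y ` block s j = {}"
      using inj_on_image_Int[OF iX block_subset[OF i] block_subset[OF j]]
        inj_on_image_Int[OF iY block_subset[OF i] block_subset[OF j]] block_disjoint[OF i j ij] by simp
  qed
  show "\<forall>Z. Z \<subseteq> {1..k} \<longrightarrow> basis E Ind ((B1 - (\<Union>i\<in>Z. X ` block s i)) \<union> (\<Union>i\<in>Z. Y ` block s i))"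
  proof (intro allI impI)
  fix Z assume Z: "Z \<subseteq> {1..k}"
  define U where "U = (\<Union>i\<in>Z. block s i)"
  have U: "U \<subseteq> {..<k * s}" unfolding U_def using block_subset Z by blast
  have "basis E Ind ((B1 - X ` U) \<union> Y ` U)"
  proof (rule stair_submatrix_exchange_basis[OF fin B1])
    show "finite U" using U finite_subset by blast
    show "card (carrier R) * (card (carrier R) - 1) dvd card U"
      unfolding U_def card_UN_block[OF Z] s by simp
    have "B2 \<subseteq> E" using B2 indep_subset unfolding basis_def by blast
    then show "\<And>t. t \<in> U \<Longrightarrow> X t \<in> B1" "\<And>t. t \<in> U \<Longrightarrow> Y t \<in> E - B1"
      using X Y U by blast+
    show "inj_on X U" "inj_on Y U" using iX iY U inj_on_subset by blast+
    show "\<And>t' t. t' \<in> U \<Longrightarrow> t \<in> U \<Longrightarrow> coord B1 (X t') (Y t) = stair a b d t' t"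
      using pat U by blast
  qed (use abd nondeg in auto)
  moreover have "(\<Union>i\<in>Z. X ` block s i) = X ` U" "(\<Union>i\<in>Z. Y ` block s i) = Y ` U"
    unfolding U_def by auto
  ultimately show "basis E Ind ((B1 - (\<Union>i\<in>Z. X ` block s i)) \<union> (\<Union>i\<in>Z. Y ` block s i))" by simp
  qed
qed

end

context represented_matroid
begin

lemma coord_staircase:
  assumes fin: "finite (carrier R)" and B1: "basis E Ind B1" and B2: "basis E Ind B2"
    and card: "card (carrier R) ^ L \<le> card (B1 - B2)"
  obtains xs ys w where "staircase (coord B1) (B1 - B2) (B2 - B1) L xs ys w"
proof -
  have B12: "B1 \<subseteq> E" "B2 \<subseteq> E" "finite B1"
    using B1 B2 indep_subset indep_finite unfolding basis_def by auto
  have "\<exists>xs ys w. staircase (coord B1) (B1 - B2) (B2 - B1) L xs ys w"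
  proof (rule staircase_exists[OF card_carrier_ge_two[OF fin] fin order_refl])
    show "\<And>x y. x \<in> B1 - B2 \<Longrightarrow> y \<in> B2 - B1 \<Longrightarrow> coord B1 x y \<in> carrier R"
      using coord_closed[OF B1] B12 by blast
    show "\<And>x x'. x \<in> B1 - B2 \<Longrightarrow> x' \<in> B1 - B2 \<Longrightarrow> x \<noteq> x' \<Longrightarrow> \<exists>y\<in>B2 - B1. coord B1 x y \<noteq> coord B1 x' y"
      using coord_rows_distinct[OF B1 B2] by blast
  qed (use B12 card in auto)
  then show ?thesis using that by blast
qed

lemma k_exchange_of_card_diff:
  assumes fin: "finite (carrier R)" and q: "card (carrier R) = q"
    and ram: "partn_lst {..<L} (replicate (q ^ 3) (k * (q * (q - 1)) + 2)) 2"
    and B1: "basis E Ind B1" and B2: "basis E Ind B2" and card: "q ^ L \<le> card (B1 - B2)"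
  shows "k_exchange E Ind k B1 B2"
proof -
  define n where "n = k * (q * (q - 1))"
  obtain xs ys w where st: "staircase (coord B1) (B1 - B2) (B2 - B1) L xs ys w"
    using coord_staircase[OF fin B1 B2] card q by blast
  have xs: "\<And>i. i < L \<Longrightarrow> xs i \<in> B1 - B2" and ys: "\<And>i. i < L \<Longrightarrow> ys i \<in> B2 - B1"
    and ixs: "inj_on xs {..<L}" and iys: "inj_on ys {..<L}"
    using st unfolding staircase_def by auto
  have "B2 \<subseteq> E" using B2 indep_subset unfolding basis_def by blast
  then have AV: "coord B1 (xs i) (ys j) \<in> carrier R" if "i < L" "j < L" for i j
    using coord_closed[OF B1, of "ys j" "xs i"] xs[OF that(1)] ys[OF that(2)] by blast
  have ram': "partn_lst {..<L} (replicate (card (carrier R) ^ 3) (n + 2)) 2"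
    using ram q unfolding n_def by simp
  obtain g a b d where mono: "strict_mono_on {..<Suc n} g" and gL: "\<And>t. t < Suc n \<Longrightarrow> g t < L"
    and abd: "a \<in> carrier R" "b \<in> carrier R" "d \<in> carrier R" and db: "d \<noteq> b"
    and pat: "\<And>t' t. t' < Suc n \<Longrightarrow> t < Suc n \<Longrightarrow> coord B1 (xs (g t')) (ys (g t)) = stair a b d t' t"
    using staircase_stair_pattern[OF st fin AV ram'] by metis
  have inj: "inj_on (zs \<circ> g) {..<Suc n}" if "inj_on zs {..<L}" for zs :: "nat \<Rightarrow> 'e"
    using that gL strict_mono_on_imp_inj_on[OF mono] by (intro comp_inj_on) (auto intro: inj_on_subset)
  show ?thesis
  proof (cases "d = \<zero> \<and> a = \<zero>")
    case False
    show ?thesis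
      by (rule stair_pattern_k_exchange[OF fin B1 B2 _ _ _ _ _ abd, where X = "xs \<circ> g" and Y = "ys \<circ> g"])
        (use False db xs ys gL pat inj[OF ixs] inj[OF iys] in \<open>auto simp: q n_def intro: inj_on_subset\<close>)
  next
    case True
    text \<open>Dropping the first row turns the pattern into the nonsingular \<open>stair \<zero> b b\<close>.\<close>
    have "inj_on (\<lambda>t. xs (g (Suc t))) {..<n}"
      using inj[OF ixs] unfolding inj_on_def by fastforce
    moreover have "coord B1 (xs (g (Suc t'))) (ys (g t)) = stair \<zero> b b t' t" if "t' < n" "t < n" for t' t
      using pat[of "Suc t'" t] that True stair_shift_rows[of \<zero> b t' t] by simp
    ultimately show ?thesis
      by (intro stair_pattern_k_exchange[OF fin B1 B2, where X = "\<lambda>t. xs (g (Suc t))" and Y = "ys \<circ> g"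
            and a = \<zero> and b = b and d = b])
        (use True db xs ys gL inj[OF iys] abd in \<open>auto simp: q n_def intro: inj_on_subset\<close>)
  qed
qed

end

theorem theorem5p14:
  shows "\<exists>f :: nat \<Rightarrow> nat \<Rightarrow> nat.
    \<forall>q k (F :: nat ring) (E :: nat set) indep.
      (\<exists>p n. prime p \<and> n > 0 \<and> q = p ^ n) \<and> k > 0
      \<and> field F \<and> finite (carrier F) \<and> card (carrier F) = q
      \<and> matroid E indep \<and> representable_over F E indep
      \<longrightarrow> weakly_base_orderable E indep (f q k) k"
proof -
  define L where "L q k = (SOME L :: nat. partn_lst {..<L} (replicate (q ^ 3) (k * (q * (q - 1)) + 2)) 2)"
    for q k :: nat
  have ram: "partn_lst {..<L q k} (replicate (q ^ 3) (k * (q * (q - 1)) + 2)) 2" for q k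
    unfolding L_def by (rule someI_ex[OF ramsey_full])
  show ?thesis
  proof (intro exI[of _ "\<lambda>q k. q ^ L q k"] allI impI)
    fix q k :: nat and F :: "nat ring" and E :: "nat set" and Ind
    assume H: "(\<exists>p n. prime p \<and> n > 0 \<and> q = p ^ n) \<and> k > 0
        \<and> field F \<and> finite (carrier F) \<and> card (carrier F) = q
        \<and> matroid E Ind \<and> representable_over F E Ind"
    then obtain r v where "represented_matroid F E Ind r v"
      unfolding representable_over_def represented_matroid_def represented_matroid_axioms_def by blast
    then show "weakly_base_orderable E Ind (q ^ L q k) k"
      unfolding weakly_base_orderable_def using H ram represented_matroid.k_exchange_of_card_diff by blast
  qed
qed

end
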